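(* The set $\mathcal{M}$ of T-invariant means on $C_{ub}(\mathbb{R}_+)$ equals the weak*-closed convex hull of $\mathcal{Q}$.
   Context: $C_{ub}(\mathbb{R}_+)$: real-valued uniformly continuous bounded functions on $\mathbb{R}_+=[0,\infty)$; a T-invariant mean is a positive linear functional $\varphi$ with $\varphi(1)=1$ and $\varphi(T_sf)=\varphi(f)$ for all $s\ge0$, $(T_sf)(x)=f(x+s)$. For an ultrafilter $\mathcal{V}$ on a set $X$ and $g$ from $X$ to a compact Hausdorff space, $\mathcal{V}\text{-}\lim_x g(x)$ is the point $y$ with $g^{-1}(N)\in\mathcal{V}$ for every neighborhood $N$ of $y$. Let $\beta\mathbb{N}_0$ be the Stone–Čech compactification of $\mathbb{N}_0$ (points = ultrafilters on $\mathbb{N}_0$), $\tau$ the continuous extension of $n\mapsto n+1$, $\mathbb{N}_0^*=\beta\mathbb{N}_0\setminus\mathbb{N}_0$. Let $\Omega=(\beta\mathbb{N}_0\times[0,1])/\sim$ with $(\tau\eta,0)\sim(\eta,1)$; it contains $\mathbb{R}_+$ via $(n,t)\mapsto n+t$ and every $f\in C_{ub}(\mathbb{R}_+)$ extends continuously to $\overline{f}$ on $\Omega$: identifying $\omega=(\eta,t)$ with the ultrafilter $\{A+t:A\in\eta\}$ on $\mathbb{R}_+$, $\overline{f}(\omega)=\omega\text{-}\lim_xf(x)$. Let $\Omega^*=\Omega\setminus\mathbb{R}_+$ and for $s\in\mathbb{R}$ let $\tau^s(\eta,t)=(\tau^{[t+s]}\eta,\,t+s-[t+s])$ on $\Omega^*$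 ($[\cdot]$ the integer part), a continuous flow. For $f\in C_{ub}(\mathbb{R}_+)$ and $\omega\in\Omega^*$ put $f_\omega(s)=\overline{f}(\tau^s\omega)$, $s\in\mathbb{R}$. For $\omega\in\Omega^*$ and an ultrafilter $\mathcal{U}$ on $\mathbb{R}_+$ containing no bounded set, $\varphi^{\mathcal{U}}_\omega(f)=\mathcal{U}\text{-}\lim_x\frac1x\int_0^xf_\omega(t)\,dt$; $\mathcal{Q}$ is the set of all such $\varphi^{\mathcal{U}}_\omega$. *)

theory Defs
  imports "HOL-Analysis.Analysis"
begin

text \<open>Elements of C_ub(R+) are represented by functions real => real that are uniformly
continuous and bounded on [0,oo) and normalised by f x = f 0 for x < 0
(this gives a bijection with C_ub(R+)).\<close>
definition Cub :: "(real \<Rightarrow> real) set" where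
  "Cub = {f. uniformly_continuous_on {0..} f \<and> bounded (f ` {0..}) \<and> (\<forall>x<0. f x = f 0)}"

definition shiftT :: "real \<Rightarrow> (real \<Rightarrow> real) \<Rightarrow> (real \<Rightarrow> real)" where
  "shiftT s f = (\<lambda>x. f (max x 0 + s))"

text \<open>Functionals on C_ub(R+) are functions (real => real) => real vanishing outside Cub.\<close>
definition is_T_invariant_mean :: "((real \<Rightarrow> real) \<Rightarrow> real) \<Rightarrow> bool" where
  "is_T_invariant_mean \<phi> \<longleftrightarrow>
     (\<forall>f. f \<notin> Cub \<longrightarrow> \<phi> f = 0) \<and>
     (\<forall>f\<in>Cub. \<forall>g\<in>Cub. \<phi> (\<lambda>x. f x + g x) = \<phi> f + \<phi> g) \<and>
     (\<forall>f\<in>Cub. \<forall>c::real. \<phi> (\<lambda>x. c * f x) = c * \<phi> f) \<and>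
     (\<forall>f\<in>Cub. (\<forall>x\<ge>0. f x \<ge> 0) \<longrightarrow> \<phi> f \<ge> 0) \<and>
     \<phi> (\<lambda>_. 1) = 1 \<and>
     (\<forall>s\<ge>0. \<forall>f\<in>Cub. \<phi> (shiftT s f) = \<phi> f)"

definition ultrafilter :: "'a filter \<Rightarrow> bool" where
  "ultrafilter F \<longleftrightarrow> F \<noteq> bot \<and> (\<forall>P. eventually P F \<or> eventually (\<lambda>x. \<not> P x) F)"

text \<open>Points of N0^* = beta N0 \ N0: free (non-principal) ultrafilters on nat.\<close>
definition free_uf :: "nat filter \<Rightarrow> bool" where
  "free_uf \<eta> \<longleftrightarrow> ultrafilter \<eta> \<and> (\<forall>n. \<not> eventually (\<lambda>m. m = n) \<eta>)"

text \<open>Points of Omega^*: pairs (eta, t) with eta in N0^* and 0 <= t < 1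
(the representative with t < 1 of each class of the identification (tau eta,0) ~ (eta,1)).\<close>
definition Omega_star :: "(nat filter \<times> real) set" where
  "Omega_star = {(\<eta>, t). free_uf \<eta> \<and> 0 \<le> t \<and> t < 1}"

definition tau_pow :: "int \<Rightarrow> nat filter \<Rightarrow> nat filter" where
  "tau_pow k \<eta> = filtermap (\<lambda>n. nat (int n + k)) \<eta>"

definition omega_flow :: "real \<Rightarrow> nat filter \<times> real \<Rightarrow> nat filter \<times> real" where
  "omega_flow s \<omega> = (case \<omega> of (\<eta>, t) \<Rightarrow>
      (tau_pow \<lfloor>t + s\<rfloor> \<eta>, t + s - of_int \<lfloor>t + s\<rfloor>))"

text \<open>omega = (eta,t) identified with the ultrafilter {A + t : A in eta} on R+.\<close>
definition uf_of :: "nat filter \<times> real \<Rightarrow> real filter" where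
  "uf_of \<omega> = (case \<omega> of (\<eta>, t) \<Rightarrow> filtermap (\<lambda>n. real n + t) \<eta>)"

text \<open>Continuous extension f-bar to Omega: f-bar(omega) = omega-lim f.\<close>
definition fbar :: "(real \<Rightarrow> real) \<Rightarrow> nat filter \<times> real \<Rightarrow> real" where
  "fbar f \<omega> = Lim (uf_of \<omega>) f"

definition f_omega :: "(real \<Rightarrow> real) \<Rightarrow> nat filter \<times> real \<Rightarrow> real \<Rightarrow> real" where
  "f_omega f \<omega> s = fbar f (omega_flow s \<omega>)"

definition unbounded_uf :: "real filter \<Rightarrow> bool" where
  "unbounded_uf U \<longleftrightarrow> ultrafilter U \<and> eventually (\<lambda>x. 0 \<le> x) U \<and>
     (\<forall>A. eventually (\<lambda>x. x \<in> A) U \<longrightarrow> \<not> bounded A)"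

definition phiQ :: "real filter \<Rightarrow> nat filter \<times> real \<Rightarrow> (real \<Rightarrow> real) \<Rightarrow> real" where
  "phiQ U \<omega> f = (if f \<in> Cub then Lim U (\<lambda>x. (1 / x) * integral {0..x} (f_omega f \<omega>)) else 0)"

definition Qset :: "((real \<Rightarrow> real) \<Rightarrow> real) set" where
  "Qset = {phiQ U \<omega> | U \<omega>. \<omega> \<in> Omega_star \<and> unbounded_uf U}"

definition conv_hull_fun :: "(('a \<Rightarrow> real)) set \<Rightarrow> ('a \<Rightarrow> real) set" where
  "conv_hull_fun S = {(\<lambda>f. \<Sum>i<n. a i * \<phi> i f) | (n::nat) a \<phi>.
      (\<forall>i<n. 0 \<le> a i \<and> \<phi> i \<in> S) \<and> (\<Sum>i<n. a i) = 1}"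

text \<open>Weak* topology = topology of pointwise convergence on Cub; on functionals vanishing
outside Cub this is the product topology of the function space (Function_Topology).\<close>

end

theory Submission
  imports Defs
begin

text \<open>
  Each functional \<open>\<phi>\<^sup>U\<^sub>\<omega>\<close> is an ultrafilter limit of Cesaro means of the bounded, uniformly
  continuous orbit function \<open>f\<^sub>\<omega>\<close>, hence an invariant mean; since the invariant means form a
  weak*-closed convex set, this gives one inclusion.

  Conversely, let \<open>\<phi>\<close> be an invariant mean outside the closed hull. Finitely many coordinates
  separate it from the hull, and minimising the squared distance to \<open>\<phi>\<close> in these coordinates
  yields \<open>h\<close> with \<open>\<phi> h > \<psi> h + \<epsilon>\<^sup>2/2\<close> for every \<open>\<psi>\<close> in the hull. On the other hand, averaging
  translates of \<open>h\<close> and using invariance shows that \<open>h\<close> has arbitrarily long windows, arbitrarily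
  far out, with average at least \<open>\<phi> h - \<epsilon>\<close>; the rising sun lemma turns them into starting
  points \<open>x\<^sub>m \<ge> m\<close> from which every initial segment of length at most \<open>m\<close> has such an average.
  An ultrafilter limit of the translates \<open>h(x\<^sub>m + \<cdot>)\<close> is an orbit function \<open>h\<^sub>\<omega>\<close> whose Cesaro
  means all stay above \<open>\<phi> h - \<epsilon>\<close>, so some \<open>\<psi>\<close> in Q has \<open>\<psi> h \<ge> \<phi> h - \<epsilon>\<close>.
\<close>

section \<open>Ultrafilters\<close>

lemma ultrafilter_not_bot: "ultrafilter F \<Longrightarrow> F \<noteq> bot"
  by (simp add: ultrafilter_def)

lemma ultrafilterI_maximal:
  assumes "U \<noteq> bot" and maximal: "\<And>H. H \<noteq> bot \<Longrightarrow> H \<le> U \<Longrightarrow> H = U"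
  shows "ultrafilter U"
  unfolding ultrafilter_def
proof (intro conjI allI disjCI)
  fix P assume "\<not> eventually (\<lambda>x. \<not> P x) U"
  then have "inf U (principal {x. P x}) = U"
    by (intro maximal) (simp_all add: trivial_limit_def eventually_inf_principal not_eventually)
  moreover have "eventually P (inf U (principal {x. P x}))"
    by (simp add: eventually_inf_principal)
  ultimately show "eventually P U" by simp
qed (rule assms(1))

lemma Inf_chain_not_bot:
  fixes C :: "'a filter set"
  assumes "C \<noteq> {}" "bot \<notin> C" and chain: "\<And>G H. G \<in> C \<Longrightarrow> H \<in> C \<Longrightarrow> G \<le> H \<or> H \<le> G"
  shows "Inf C \<noteq> bot"
proof
  assume "Inf C = bot"
  moreover have "\<exists>K\<in>C. K \<le> inf G H" if "G \<in> C" "H \<in> C" for G H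
  proof (cases "G \<le> H")
    case True
    with that show ?thesis by (intro bexI[of _ G]) auto
  next
    case False
    with chain[OF that] that show ?thesis by (intro bexI[of _ H]) auto
  qed
  ultimately obtain G where "G \<in> C" "G = bot"
    using eventually_Inf_base[OF assms(1), of "\<lambda>_. False"] unfolding trivial_limit_def by blast
  with assms(2) show False by simp
qed

lemma ultrafilter_le_exists:
  fixes F :: "'a filter"
  assumes "F \<noteq> bot"
  shows "\<exists>U\<le>F. ultrafilter U"
proof -
  define R :: "('a filter \<times> 'a filter) set"
    where "R = {(G, H). H \<noteq> bot \<and> H \<le> G \<and> G \<le> F}"
  have field_R: "Field R = {G. G \<noteq> bot \<and> G \<le> F}"
    by (auto simp: R_def Field_def bot_unique)
  have po: "Partial_order R"
    unfolding R_def partial_order_on_def preorder_on_def refl_on_def antisym_def trans_def Field_def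
    by (auto simp: bot_unique)
  have ub: "\<exists>u\<in>Field R. \<forall>G\<in>C. (G, u) \<in> R" if C: "C \<in> Chains R" for C
  proof (cases "C = {}")
    case True
    then show ?thesis using assms by (auto simp: field_R)
  next
    case False
    have C_sub: "G \<noteq> bot \<and> G \<le> F" if "G \<in> C" for G
      using C that by (fastforce simp: Chains_def R_def)
    have "Inf C \<noteq> bot"
      using C C_sub by (intro Inf_chain_not_bot False) (auto simp: Chains_def R_def)
    then have "Inf C \<in> Field R"
      using False C_sub by (auto simp: field_R intro: Inf_lower2)
    moreover have "\<forall>G\<in>C. (G, Inf C) \<in> R"
      using \<open>Inf C \<noteq> bot\<close> C_sub by (simp add: R_def Inf_lower)
    ultimately show ?thesis by blast
  qed
  from Zorns_po_lemma[OF po ub] obtain U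
    where U: "U \<in> Field R" and max: "\<forall>H\<in>Field R. (U, H) \<in> R \<longrightarrow> H = U"
    by blast
  have "ultrafilter U"
  proof (rule ultrafilterI_maximal)
    show "U \<noteq> bot" using U by (simp add: field_R)
    fix H assume "H \<noteq> bot" "H \<le> U"
    with U have "H \<in> Field R" "(U, H) \<in> R"
      unfolding field_R by (auto simp: R_def)
    with max show "H = U" by blast
  qed
  with U show ?thesis by (auto simp: field_R)
qed

lemma ultrafilter_filtermap: "ultrafilter F \<Longrightarrow> ultrafilter (filtermap g F)"
  by (auto simp: ultrafilter_def eventually_filtermap filtermap_bot_iff)

lemma ultrafilter_tendsto_Lim:
  fixes g :: "'a \<Rightarrow> real"
  assumes F: "ultrafilter F" and bounded: "eventually (\<lambda>x. \<bar>g x\<bar> \<le> B) F"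
  shows "(g \<longlongrightarrow> Lim F g) F"
proof -
  let ?G = "filtermap g F"
  have G: "ultrafilter ?G" using ultrafilter_filtermap[OF F] .
  have "eventually (\<lambda>y. y \<in> {-B..B}) ?G"
    using bounded by (auto simp: eventually_filtermap elim!: eventually_mono)
  then obtain L where L: "inf (nhds L) ?G \<noteq> bot"
    using compact_Icc[of "-B" B] ultrafilter_not_bot[OF G] unfolding compact_filter by blast
  have "?G \<le> nhds L"
  proof (rule filter_leI)
    fix P assume P: "eventually P (nhds L)"
    show "eventually P ?G"
    proof (rule ccontr)
      assume "\<not> eventually P ?G"
      then have "eventually (\<lambda>y. \<not> P y) ?G" using G by (auto simp: ultrafilter_def)
      with P have "eventually (\<lambda>_. False) (inf (nhds L) ?G)"
        unfolding eventually_inf by blast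
      with L show False by (simp add: trivial_limit_def)
    qed
  qed
  then have "(g \<longlongrightarrow> L) F" by (simp add: filterlim_def)
  then show ?thesis using tendsto_Lim ultrafilter_not_bot[OF F] by metis
qed

lemma free_uf_not_bot: "free_uf \<eta> \<Longrightarrow> \<eta> \<noteq> bot"
  by (simp add: free_uf_def ultrafilter_def)

lemma free_uf_eventually_ge:
  assumes "free_uf \<eta>"
  shows "eventually (\<lambda>m. N \<le> m) \<eta>"
proof -
  have "eventually (\<lambda>m. m \<noteq> n) \<eta>" for n
    using assms by (auto simp: free_uf_def ultrafilter_def)
  then have "eventually (\<lambda>m. \<forall>n\<in>{..<N}. m \<noteq> n) \<eta>"
    by (intro eventually_ball_finite) auto
  then show ?thesis by (rule eventually_mono) (auto simp: not_less[symmetric])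
qed

lemma free_uf_eventually_real_ge:
  assumes "free_uf \<eta>"
  shows "eventually (\<lambda>n. a \<le> real n) \<eta>"
  using free_uf_eventually_ge[OF assms, of "nat \<lceil>a\<rceil>"]
  by (rule eventually_mono) (meson le_nat_iff ceiling_le_iff order_trans of_nat_le_iff real_nat_ceiling_ge)

lemma free_uf_filtermap:
  assumes "ultrafilter V" "V \<le> sequentially" "\<And>m. m \<le> N m"
  shows "free_uf (filtermap N V)"
  unfolding free_uf_def
proof (intro conjI allI notI)
  show "ultrafilter (filtermap N V)" by (rule ultrafilter_filtermap[OF assms(1)])
  fix n assume "eventually (\<lambda>m. m = n) (filtermap N V)"
  then have "eventually (\<lambda>m. N m = n \<and> Suc n \<le> m) V"
    using filter_leD[OF assms(2) eventually_ge_at_top[of "Suc n"]]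
    by (simp add: eventually_filtermap eventually_conj)
  then have "eventually (\<lambda>_. False) V"
  proof (rule eventually_mono)
    fix m assume "N m = n \<and> Suc n \<le> m"
    with assms(3)[of m] show False by simp
  qed
  with ultrafilter_not_bot[OF assms(1)] show False by simp
qed

lemma unbounded_uf_not_bot: "unbounded_uf U \<Longrightarrow> U \<noteq> bot"
  by (simp add: unbounded_uf_def ultrafilter_not_bot)

lemma unbounded_uf_le_at_top:
  assumes "unbounded_uf U"
  shows "U \<le> at_top"
proof (rule filter_leI)
  fix P :: "real \<Rightarrow> bool" assume "eventually P at_top"
  then obtain M where M: "\<And>x. x \<ge> M \<Longrightarrow> P x" by (auto simp: eventually_at_top_linorder)
  have "eventually (\<lambda>x. M \<le> x) U"
  proof (rule ccontr)
    assume "\<not> eventually (\<lambda>x. M \<le> x) U"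
    then have "eventually (\<lambda>x. x < M) U"
      using assms by (auto simp: unbounded_uf_def ultrafilter_def not_le)
    with assms have "eventually (\<lambda>x. x \<in> {0..M}) U"
      by (auto simp: unbounded_uf_def elim: eventually_elim2)
    with assms show False unfolding unbounded_uf_def using bounded_closed_interval by blast
  qed
  then show "eventually P U" using M by (auto elim: eventually_mono)
qed

lemma unbounded_uf_exists: "\<exists>U. unbounded_uf U"
proof -
  have "(at_top :: real filter) \<noteq> bot" by simp
  then obtain U :: "real filter" where U: "U \<le> at_top" "ultrafilter U"
    using ultrafilter_le_exists by blast
  have "\<not> bounded A" if A: "eventually (\<lambda>x. x \<in> A) U" for A
  proof
    assume "bounded A"
    then obtain M where M: "\<And>x. x \<in> A \<Longrightarrow> x \<le> M" by (auto simp: bounded_iff abs_le_iff)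
    have "eventually (\<lambda>x. x \<in> A \<and> M < x) U"
      using A filter_leD[OF U(1) eventually_gt_at_top] by (rule eventually_conj)
    then have "eventually (\<lambda>_. False) U"
      by (rule eventually_mono) (use M in force)
    then show False using ultrafilter_not_bot[OF U(2)] by simp
  qed
  moreover have "eventually (\<lambda>x. 0 \<le> x) U" using filter_leD[OF U(1) eventually_ge_at_top] .
  ultimately show ?thesis using U(2) unfolding unbounded_uf_def by blast
qed

section \<open>The space C_ub\<close>

lemma uniformly_continuous_on_max_0: "uniformly_continuous_on S (\<lambda>x::real. max x 0)"
  unfolding uniformly_continuous_on_def dist_real_def
proof (intro allI impI)
  fix e :: real assume "e > 0"
  then show "\<exists>d>0. \<forall>x\<in>S. \<forall>y\<in>S. \<bar>y - x\<bar> < d \<longrightarrow> \<bar>max y 0 - max x 0\<bar> < e"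
    by (intro exI[of _ e]) (auto simp: max_def)
qed

lemma uniformly_continuous_on_subset:
  fixes f :: "'a::metric_space \<Rightarrow> 'b::metric_space"
  shows "uniformly_continuous_on S f \<Longrightarrow> T \<subseteq> S \<Longrightarrow> uniformly_continuous_on T f"
  unfolding uniformly_continuous_on_def by (meson subsetD)

lemma Cub_eq_max_0: "f \<in> Cub \<Longrightarrow> f x = f (max x 0)"
  by (cases "x < 0") (auto simp: Cub_def max_def)

lemma Cub_bounded:
  assumes "f \<in> Cub"
  obtains B where "\<And>x. \<bar>f x\<bar> \<le> B"
proof -
  obtain B where "\<forall>y\<in>f ` {0..}. norm y \<le> B"
    using assms by (auto simp: Cub_def bounded_iff)
  then have "\<bar>f x\<bar> \<le> B" for x
    using Cub_eq_max_0[OF assms, of x] by auto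
  then show ?thesis using that by blast
qed

lemma Cub_uniformly_continuous:
  assumes "f \<in> Cub"
  shows "uniformly_continuous_on UNIV f"
proof -
  have "(\<lambda>x::real. max x 0) ` UNIV = {0..}"
    by (auto simp: image_iff) (metis max.absorb1)
  then have "uniformly_continuous_on UNIV (\<lambda>x. f (max x 0))"
    using assms uniformly_continuous_on_max_0
    by (auto simp: Cub_def intro: uniformly_continuous_on_compose)
  then show ?thesis using Cub_eq_max_0[OF assms] by simp
qed

lemma Cub_continuous: "f \<in> Cub \<Longrightarrow> continuous_on S f"
  using Cub_uniformly_continuous continuous_on_subset uniformly_continuous_imp_continuous
  by blast

lemma Cub_modulus:
  assumes "f \<in> Cub" "e > 0"
  obtains d where "d > 0" "\<And>x y. \<bar>x - y\<bar> < d \<Longrightarrow> \<bar>f x - f y\<bar> < e"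
  using uniformly_continuous_onE[OF Cub_uniformly_continuous[OF assms(1)] assms(2)]
  by (metis UNIV_I dist_real_def)

lemma Cub_add: "f \<in> Cub \<Longrightarrow> g \<in> Cub \<Longrightarrow> (\<lambda>x. f x + g x) \<in> Cub"
  by (auto simp: Cub_def intro: uniformly_continuous_on_add bounded_plus_comp)

lemma Cub_cmult: "f \<in> Cub \<Longrightarrow> (\<lambda>x. c * f x) \<in> Cub"
  using bounded_scaleR_comp[of f "{0..}" c]
  by (auto simp: Cub_def intro: uniformly_continuous_on_cmul_left)

lemma Cub_const: "(\<lambda>_. c) \<in> Cub"
  by (auto simp: Cub_def uniformly_continuous_on_const image_constant[of 0])

lemma Cub_diff: "f \<in> Cub \<Longrightarrow> g \<in> Cub \<Longrightarrow> (\<lambda>x. f x - g x) \<in> Cub"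
  using Cub_add[of f "\<lambda>x. -1 * g x"] Cub_cmult[of g "-1"] by simp

lemma Cub_sum: "(\<And>i. i \<in> I \<Longrightarrow> g i \<in> Cub) \<Longrightarrow> (\<lambda>x. \<Sum>i\<in>I. c i * g i x) \<in> Cub"
  by (induction I rule: infinite_finite_induct) (simp_all add: Cub_const Cub_add Cub_cmult)

lemma Cub_shiftT:
  assumes "f \<in> Cub" "0 \<le> s"
  shows "shiftT s f \<in> Cub"
proof -
  have "uniformly_continuous_on UNIV (\<lambda>x. max x 0 + s)"
    by (intro uniformly_continuous_on_add uniformly_continuous_on_max_0 uniformly_continuous_on_const)
  then have "uniformly_continuous_on UNIV (shiftT s f)"
    unfolding shiftT_def
    by (rule uniformly_continuous_on_compose[OF _ uniformly_continuous_on_subset,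
          OF _ Cub_uniformly_continuous[OF assms(1)] subset_UNIV])
  moreover have "shiftT s f ` {0..} \<subseteq> f ` {0..}"
    using assms(2) by (auto simp: shiftT_def)
  ultimately show ?thesis
    using assms by (auto simp: Cub_def shiftT_def intro: uniformly_continuous_on_subset bounded_subset)
qed

section \<open>Invariant means and their convex hulls\<close>

context
  fixes \<phi> :: "(real \<Rightarrow> real) \<Rightarrow> real"
  assumes mean: "is_T_invariant_mean \<phi>"
begin

lemma mean_add: "f \<in> Cub \<Longrightarrow> g \<in> Cub \<Longrightarrow> \<phi> (\<lambda>x. f x + g x) = \<phi> f + \<phi> g"
  using mean by (simp add: is_T_invariant_mean_def)

lemma mean_cmult: "f \<in> Cub \<Longrightarrow> \<phi> (\<lambda>x. c * f x) = c * \<phi> f"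
  using mean by (simp add: is_T_invariant_mean_def)

lemma mean_nonneg: "f \<in> Cub \<Longrightarrow> (\<And>x. 0 \<le> x \<Longrightarrow> 0 \<le> f x) \<Longrightarrow> 0 \<le> \<phi> f"
  using mean by (simp add: is_T_invariant_mean_def)

lemma mean_shiftT: "0 \<le> s \<Longrightarrow> f \<in> Cub \<Longrightarrow> \<phi> (shiftT s f) = \<phi> f"
  using mean by (simp add: is_T_invariant_mean_def)

lemma mean_outside_Cub: "f \<notin> Cub \<Longrightarrow> \<phi> f = 0"
  using mean by (simp add: is_T_invariant_mean_def)

lemma mean_const: "\<phi> (\<lambda>_. c) = c"
  using mean_cmult[OF Cub_const, of c 1] mean by (simp add: is_T_invariant_mean_def)

lemma mean_sum: "(\<And>i. i \<in> I \<Longrightarrow> g i \<in> Cub) \<Longrightarrow> \<phi> (\<lambda>x. \<Sum>i\<in>I. c i * g i x) = (\<Sum>i\<in>I. c i * \<phi> (g i))"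
proof (induction I rule: infinite_finite_induct)
  case (insert i I)
  then show ?case by (simp add: mean_add mean_cmult Cub_cmult Cub_sum)
qed (simp_all add: mean_const)

lemma mean_diff: "f \<in> Cub \<Longrightarrow> g \<in> Cub \<Longrightarrow> \<phi> (\<lambda>x. f x - g x) = \<phi> f - \<phi> g"
  using mean_add[of f "\<lambda>x. -1 * g x"] mean_cmult[of g "-1"] Cub_cmult[of g "-1"] by simp

lemma mean_mono:
  assumes "f \<in> Cub" "g \<in> Cub" "\<And>x. 0 \<le> x \<Longrightarrow> f x \<le> g x"
  shows "\<phi> f \<le> \<phi> g"
  using mean_nonneg[OF Cub_diff[OF assms(2,1)]] mean_diff[OF assms(2,1)] assms(3) by simp

lemma mean_le: "f \<in> Cub \<Longrightarrow> (\<And>x. 0 \<le> x \<Longrightarrow> f x \<le> B) \<Longrightarrow> \<phi> f \<le> B"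
  using mean_mono[OF _ Cub_const, of f B] by (simp add: mean_const)

lemma mean_abs_le:
  assumes "\<And>x. \<bar>f x\<bar> \<le> B"
  shows "\<bar>\<phi> f\<bar> \<le> B"
proof (cases "f \<in> Cub")
  case True
  have "- B \<le> f x" "f x \<le> B" for x
    using assms[of x] by linarith+
  then have "\<phi> (\<lambda>_. - B) \<le> \<phi> f" "\<phi> f \<le> \<phi> (\<lambda>_. B)"
    by (auto intro!: mean_mono True Cub_const)
  then show ?thesis by (simp add: mean_const)
next
  case False
  then show ?thesis using assms[of 0] by (simp add: mean_outside_Cub)
qed

end

lemma mean_convex_combination:
  assumes "\<And>i. i < n \<Longrightarrow> 0 \<le> a i \<and> is_T_invariant_mean (\<phi> i)" "(\<Sum>i<n. a i) = 1"
  shows "is_T_invariant_mean (\<lambda>f. \<Sum>i<n. a i * \<phi> i f)"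
  unfolding is_T_invariant_mean_def
proof (intro conjI allI impI ballI)
  show "(\<Sum>i<n. a i * \<phi> i f) = 0" if "f \<notin> Cub" for f
    using assms that by (auto intro!: sum.neutral simp: mean_outside_Cub)
  show "(\<Sum>i<n. a i * \<phi> i (\<lambda>x. f x + g x)) = (\<Sum>i<n. a i * \<phi> i f) + (\<Sum>i<n. a i * \<phi> i g)"
    if "f \<in> Cub" "g \<in> Cub" for f g
    using assms that by (auto simp: mean_add distrib_left sum.distrib[symmetric] intro!: sum.cong)
  show "(\<Sum>i<n. a i * \<phi> i (\<lambda>x. c * f x)) = c * (\<Sum>i<n. a i * \<phi> i f)" if "f \<in> Cub" for f c
    using assms that by (auto simp: mean_cmult sum_distrib_left intro!: sum.cong)
  show "0 \<le> (\<Sum>i<n. a i * \<phi> i f)" if f: "f \<in> Cub" "\<forall>x\<ge>0. 0 \<le> f x" for f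
  proof (rule sum_nonneg)
    fix i assume "i \<in> {..<n}"
    then show "0 \<le> a i * \<phi> i f" using assms(1)[of i] f mean_nonneg[of "\<phi> i" f] by simp
  qed
  show "(\<Sum>i<n. a i * \<phi> i (\<lambda>_. 1)) = 1"
    using assms by (auto simp: mean_const)
  show "(\<Sum>i<n. a i * \<phi> i (shiftT s f)) = (\<Sum>i<n. a i * \<phi> i f)" if "0 \<le> s" "f \<in> Cub" for s f
    using assms that by (auto simp: mean_shiftT intro!: sum.cong)
qed

lemma closed_means: "closed {\<phi>. is_T_invariant_mean \<phi>}"
proof -
  have closed_if: "closed {x. P \<longrightarrow> Q x}" if "closed {x. Q x}" for P and Q :: "'b::topological_space \<Rightarrow> bool"
    using that by (cases P) auto
  have eval: "continuous_on UNIV (\<lambda>\<phi>::(real \<Rightarrow> real) \<Rightarrow> real. \<phi> f)" for f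
    by simp
  show ?thesis
    unfolding is_T_invariant_mean_def Ball_def
    by (intro closed_Collect_conj closed_Collect_all closed_if closed_Collect_eq closed_Collect_le
        eval continuous_intros)
qed

lemma conv_hull_fun_inc: "\<psi> \<in> S \<Longrightarrow> \<psi> \<in> conv_hull_fun S"
  unfolding conv_hull_fun_def
  by (rule CollectI, rule exI[of _ 1], rule exI[of _ "\<lambda>_. 1"], rule exI[of _ "\<lambda>_. \<psi>"]) simp

lemma conv_hull_fun_means:
  "(\<And>\<psi>. \<psi> \<in> S \<Longrightarrow> is_T_invariant_mean \<psi>) \<Longrightarrow> \<phi> \<in> conv_hull_fun S \<Longrightarrow> is_T_invariant_mean \<phi>"
  unfolding conv_hull_fun_def using mean_convex_combination by blast

lemma sum_lessThan_add_nat: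
  fixes n m :: nat
  shows "(\<Sum>i<n + m. g i) = (\<Sum>i<n. g i) + (\<Sum>i<m. g (n + i))"
  by (induction m) (simp_all add: algebra_simps)

lemma conv_hull_fun_convex:
  assumes "w \<in> conv_hull_fun S" "u \<in> conv_hull_fun S" "0 \<le> t" "t \<le> 1"
  shows "(\<lambda>f. (1 - t) * w f + t * u f) \<in> conv_hull_fun S"
proof -
  obtain n :: nat and a \<phi> where w: "w = (\<lambda>f. \<Sum>i<n. a i * \<phi> i f)"
    and w_hull: "\<forall>i<n. 0 \<le> a i \<and> \<phi> i \<in> S" "(\<Sum>i<n. a i) = 1"
    using assms(1) unfolding conv_hull_fun_def by blast
  obtain m :: nat and b \<psi> where u: "u = (\<lambda>f. \<Sum>i<m. b i * \<psi> i f)"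
    and u_hull: "\<forall>i<m. 0 \<le> b i \<and> \<psi> i \<in> S" "(\<Sum>i<m. b i) = 1"
    using assms(2) unfolding conv_hull_fun_def by blast
  define c where "c i = (if i < n then (1 - t) * a i else t * b (i - n))" for i
  define \<theta> where "\<theta> i = (if i < n then \<phi> i else \<psi> (i - n))" for i
  have "(\<Sum>i<n + m. c i * \<theta> i f) = (1 - t) * w f + t * u f" for f
    by (simp add: sum_lessThan_add_nat c_def \<theta>_def w u sum_distrib_left mult.assoc)
  moreover have "(\<Sum>i<n + m. c i) = 1"
    using w_hull u_hull by (simp add: sum_lessThan_add_nat c_def sum_distrib_left[symmetric])
  moreover have "\<forall>i<n + m. 0 \<le> c i \<and> \<theta> i \<in> S"
    using w_hull u_hull assms(3,4) by (auto simp: c_def \<theta>_def)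
  ultimately show ?thesis
    unfolding conv_hull_fun_def by (intro CollectI exI[of _ "n + m"] exI[of _ c] exI[of _ \<theta>]) auto
qed

section \<open>Orbit functions and their Cesaro means\<close>

lemma integral_translate_Icc:
  fixes f :: "real \<Rightarrow> real"
  shows "integral {0..l} (\<lambda>s. f (s + c)) = integral {c..c + l} f"
  using integral_shift_real_ivl[of c c "c + l" f] by simp

definition cesaro_mean :: "(real \<Rightarrow> real) \<Rightarrow> nat filter \<times> real \<Rightarrow> real \<Rightarrow> real" where
  "cesaro_mean f \<omega> x = (1 / x) * integral {0..x} (f_omega f \<omega>)"

context
  fixes \<eta> :: "nat filter" and t :: real
  assumes \<eta>: "free_uf \<eta>"
begin

lemma f_omega_tendsto:
  assumes f: "f \<in> Cub"
  shows "((\<lambda>n. f (real n + t + s)) \<longlongrightarrow> f_omega f (\<eta>, t) s) \<eta>"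
proof -
  define k where "k = \<lfloor>t + s\<rfloor>"
  define g where "g n = real (nat (int n + k)) + (t + s - k)" for n
  have "eventually (\<lambda>n. f (g n) = f (real n + t + s)) \<eta>"
    using free_uf_eventually_real_ge[OF \<eta>, of "- real_of_int k"]
  proof (rule eventually_mono)
    fix n assume "- real_of_int k \<le> real n"
    then have "real (nat (int n + k)) = real n + k" by linarith
    then show "f (g n) = f (real n + t + s)" by (simp add: g_def algebra_simps)
  qed
  have "f_omega f (\<eta>, t) s = Lim (filtermap g \<eta>) f"
    unfolding g_def[abs_def] k_def
    by (simp add: f_omega_def omega_flow_def fbar_def uf_of_def tau_pow_def filtermap_filtermap)
  also have "\<dots> = Lim \<eta> (\<lambda>n. f (g n))"
    unfolding Topological_Spaces.Lim_def filterlim_filtermap ..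
  also have "\<dots> = Lim \<eta> (\<lambda>n. f (real n + t + s))"
    by (rule Lim_cong[OF _ refl]) fact
  finally have "f_omega f (\<eta>, t) s = Lim \<eta> (\<lambda>n. f (real n + t + s))" .
  moreover obtain B where "\<And>x. \<bar>f x\<bar> \<le> B" using Cub_bounded[OF f] by blast
  ultimately show ?thesis
    using ultrafilter_tendsto_Lim[of \<eta> "\<lambda>n. f (real n + t + s)" B] \<eta>
    by (simp add: free_uf_def)
qed

lemma f_omega_unique:
  "f \<in> Cub \<Longrightarrow> ((\<lambda>n. f (real n + t + s)) \<longlongrightarrow> L) \<eta> \<Longrightarrow> f_omega f (\<eta>, t) s = L"
  using tendsto_unique[OF free_uf_not_bot[OF \<eta>] f_omega_tendsto] by blast

lemma f_omega_add:
  "f \<in> Cub \<Longrightarrow> g \<in> Cub \<Longrightarrow> f_omega (\<lambda>x. f x + g x) (\<eta>, t) = (\<lambda>s. f_omega f (\<eta>, t) s + f_omega g (\<eta>, t) s)"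
  by (intro ext f_omega_unique Cub_add tendsto_add f_omega_tendsto)

lemma f_omega_cmult: "f \<in> Cub \<Longrightarrow> f_omega (\<lambda>x. c * f x) (\<eta>, t) = (\<lambda>s. c * f_omega f (\<eta>, t) s)"
  by (intro ext f_omega_unique Cub_cmult tendsto_mult tendsto_const f_omega_tendsto)

lemma f_omega_const: "f_omega (\<lambda>_. c) (\<eta>, t) = (\<lambda>_. c)"
  by (intro ext f_omega_unique Cub_const tendsto_const)

lemma f_omega_nonneg:
  assumes "f \<in> Cub" "\<And>x. 0 \<le> x \<Longrightarrow> 0 \<le> f x"
  shows "0 \<le> f_omega f (\<eta>, t) s"
proof (rule tendsto_lowerbound[OF f_omega_tendsto[OF assms(1)]])
  show "eventually (\<lambda>n. 0 \<le> f (real n + t + s)) \<eta>"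
    using free_uf_eventually_real_ge[OF \<eta>, of "- t - s"]
    by (rule eventually_mono) (simp add: assms(2))
qed (rule free_uf_not_bot[OF \<eta>])

lemma f_omega_shiftT:
  assumes "f \<in> Cub" "0 \<le> r"
  shows "f_omega (shiftT r f) (\<eta>, t) = (\<lambda>s. f_omega f (\<eta>, t) (s + r))"
proof (rule ext, rule f_omega_unique[OF Cub_shiftT[OF assms]])
  fix s
  have "eventually (\<lambda>n. f (real n + t + (s + r)) = shiftT r f (real n + t + s)) \<eta>"
    using free_uf_eventually_real_ge[OF \<eta>, of "- t - s"]
    by (rule eventually_mono) (simp add: shiftT_def add.assoc)
  with f_omega_tendsto[OF assms(1)]
  show "((\<lambda>n. shiftT r f (real n + t + s)) \<longlongrightarrow> f_omega f (\<eta>, t) (s + r)) \<eta>"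
    by (rule Lim_transform_eventually)
qed

lemma f_omega_bounded:
  assumes "f \<in> Cub" "\<And>x. \<bar>f x\<bar> \<le> B"
  shows "\<bar>f_omega f (\<eta>, t) s\<bar> \<le> B"
  using tendsto_upperbound[OF tendsto_rabs[OF f_omega_tendsto[OF assms(1)]] _ free_uf_not_bot[OF \<eta>]]
    assms(2) by simp

lemma f_omega_modulus:
  assumes "f \<in> Cub" and modulus: "\<And>x y. \<bar>x - y\<bar> < d \<Longrightarrow> \<bar>f x - f y\<bar> < e" and "\<bar>s - s'\<bar> < d"
  shows "\<bar>f_omega f (\<eta>, t) s - f_omega f (\<eta>, t) s'\<bar> \<le> e"
proof (rule tendsto_upperbound[OF tendsto_rabs[OF tendsto_diff]])
  show "eventually (\<lambda>n. \<bar>f (real n + t + s) - f (real n + t + s')\<bar> \<le> e) \<eta>"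
    using modulus \<open>\<bar>s - s'\<bar> < d\<close> by (intro always_eventually allI less_imp_le) simp
qed (use assms(1) f_omega_tendsto free_uf_not_bot[OF \<eta>] in auto)

lemma f_omega_uniformly_continuous:
  assumes "f \<in> Cub"
  shows "uniformly_continuous_on UNIV (f_omega f (\<eta>, t))"
  unfolding uniformly_continuous_on_def dist_real_def
proof (intro allI impI)
  fix e :: real assume "e > 0"
  then obtain d where d: "d > 0" "\<And>x y. \<bar>x - y\<bar> < d \<Longrightarrow> \<bar>f x - f y\<bar> < e / 2"
    using Cub_modulus[OF assms, of "e / 2"] by auto
  have "\<bar>f_omega f (\<eta>, t) s' - f_omega f (\<eta>, t) s\<bar> < e" if "\<bar>s' - s\<bar> < d" for s s'
    using f_omega_modulus[OF assms d(2) that] \<open>e > 0\<close> by linarith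
  with d(1) show
    "\<exists>d>0. \<forall>s\<in>UNIV. \<forall>s'\<in>UNIV. \<bar>s' - s\<bar> < d \<longrightarrow> \<bar>f_omega f (\<eta>, t) s' - f_omega f (\<eta>, t) s\<bar> < e"
    by blast
qed

lemma f_omega_continuous: "f \<in> Cub \<Longrightarrow> continuous_on S (f_omega f (\<eta>, t))"
  by (rule continuous_on_subset[OF uniformly_continuous_imp_continuous[OF f_omega_uniformly_continuous]])
    simp_all

lemma f_omega_integrable: "f \<in> Cub \<Longrightarrow> f_omega f (\<eta>, t) integrable_on {a..b}"
  by (intro integrable_continuous_real f_omega_continuous)

lemma cesaro_mean_add:
  assumes "f \<in> Cub" "g \<in> Cub"
  shows "cesaro_mean (\<lambda>x. f x + g x) (\<eta>, t) = (\<lambda>x. cesaro_mean f (\<eta>, t) x + cesaro_mean g (\<eta>, t) x)"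
  using assms
  by (simp add: cesaro_mean_def[abs_def] f_omega_add integral_add f_omega_integrable add_divide_distrib)

lemma cesaro_mean_cmult:
  "f \<in> Cub \<Longrightarrow> cesaro_mean (\<lambda>x. c * f x) (\<eta>, t) = (\<lambda>x. c * cesaro_mean f (\<eta>, t) x)"
  by (simp add: cesaro_mean_def[abs_def] f_omega_cmult)

lemma cesaro_mean_bounded:
  assumes "f \<in> Cub" "\<And>x. \<bar>f x\<bar> \<le> B" "0 < x"
  shows "\<bar>cesaro_mean f (\<eta>, t) x\<bar> \<le> B"
proof -
  have "\<bar>integral {0..x} (f_omega f (\<eta>, t))\<bar> \<le> B * (x - 0)"
    using integral_bound[of 0 x "f_omega f (\<eta>, t)" B] assms
    by (simp add: f_omega_continuous f_omega_bounded)
  with \<open>0 < x\<close> show ?thesis by (simp add: cesaro_mean_def abs_mult field_simps)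
qed

text \<open>Shifting f by r changes the integral over [0, x] only on two intervals of length r.\<close>
lemma cesaro_mean_shiftT:
  assumes f: "f \<in> Cub" and B: "\<And>x. \<bar>f x\<bar> \<le> B" and r: "0 \<le> r" "r \<le> x"
  shows "\<bar>cesaro_mean (shiftT r f) (\<eta>, t) x - cesaro_mean f (\<eta>, t) x\<bar> \<le> 2 * r * B / x"
proof -
  let ?F = "f_omega f (\<eta>, t)"
  have bound: "\<bar>integral {a..a + r} ?F\<bar> \<le> B * r" for a
    using integral_bound[of a "a + r" ?F B] r by (simp add: f f_omega_continuous f_omega_bounded B)
  have "integral {0..x} (f_omega (shiftT r f) (\<eta>, t)) = integral {r..x + r} ?F"
    using integral_translate_Icc[of x ?F r] by (simp add: f_omega_shiftT f r add.commute)
  also have "\<dots> = integral {0..x} ?F + integral {x..x + r} ?F - integral {0..r} ?F"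
    using Henstock_Kurzweil_Integration.integral_combine[of 0 r x ?F]
      Henstock_Kurzweil_Integration.integral_combine[of r x "x + r" ?F] r
    by (simp add: f f_omega_integrable)
  finally have "\<bar>integral {0..x} (f_omega (shiftT r f) (\<eta>, t)) - integral {0..x} ?F\<bar> \<le> 2 * r * B"
    using bound[of x] bound[of 0] by (auto simp: abs_le_iff algebra_simps)
  then show ?thesis
    using r by (cases "x = 0") (simp_all add: cesaro_mean_def abs_mult field_simps flip: right_diff_distrib)
qed

lemma phiQ_tendsto:
  assumes "unbounded_uf U" "f \<in> Cub"
  shows "(cesaro_mean f (\<eta>, t) \<longlongrightarrow> phiQ U (\<eta>, t) f) U"
proof -
  obtain B where B: "\<And>x. \<bar>f x\<bar> \<le> B" using Cub_bounded[OF assms(2)] by blast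
  have "eventually (\<lambda>x. \<bar>cesaro_mean f (\<eta>, t) x\<bar> \<le> B) U"
    using filter_leD[OF unbounded_uf_le_at_top[OF assms(1)] eventually_gt_at_top[of 0]]
    by (rule eventually_mono) (rule cesaro_mean_bounded[OF assms(2) B])
  with assms show ?thesis
    using ultrafilter_tendsto_Lim[of U]
    by (simp add: phiQ_def cesaro_mean_def[abs_def] unbounded_uf_def)
qed

lemma phiQ_eqI:
  assumes "unbounded_uf U" "f \<in> Cub" "(cesaro_mean f (\<eta>, t) \<longlongrightarrow> L) U"
  shows "phiQ U (\<eta>, t) f = L"
  using unbounded_uf_not_bot[OF assms(1)] phiQ_tendsto[OF assms(1,2)] assms(3)
  by (rule tendsto_unique)

lemma phiQ_shiftT:
  assumes U: "unbounded_uf U" and f: "f \<in> Cub" and r: "0 \<le> r"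
  shows "phiQ U (\<eta>, t) (shiftT r f) = phiQ U (\<eta>, t) f"
proof (rule phiQ_eqI[OF U Cub_shiftT[OF f r]])
  obtain B where B: "\<And>x. \<bar>f x\<bar> \<le> B" using Cub_bounded[OF f] by blast
  have "eventually (\<lambda>x. norm (cesaro_mean (shiftT r f) (\<eta>, t) x
      - cesaro_mean f (\<eta>, t) x) \<le> 2 * r * B / x) U"
    using filter_leD[OF unbounded_uf_le_at_top[OF U] eventually_gt_at_top[of r]]
      cesaro_mean_shiftT[OF f B r]
    by (auto elim: eventually_mono)
  moreover have "filterlim (\<lambda>x. x) at_top U"
    using unbounded_uf_le_at_top[OF U] by (simp add: filterlim_def)
  then have "((\<lambda>x. 2 * r * B / x) \<longlongrightarrow> 0) U"
    using tendsto_mult[OF tendsto_const tendsto_inverse_0_at_top, of _ U "2 * r * B"]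
    by (simp add: divide_inverse)
  ultimately have "((\<lambda>x. cesaro_mean (shiftT r f) (\<eta>, t) x - cesaro_mean f (\<eta>, t) x) \<longlongrightarrow> 0) U"
    by (rule Lim_null_comparison)
  from tendsto_add[OF this phiQ_tendsto[OF U f]]
  show "(cesaro_mean (shiftT r f) (\<eta>, t) \<longlongrightarrow> phiQ U (\<eta>, t) f) U" by simp
qed

end

lemma phiQ_is_T_invariant_mean:
  assumes "\<omega> \<in> Omega_star" and U: "unbounded_uf U"
  shows "is_T_invariant_mean (phiQ U \<omega>)"
proof -
  obtain \<eta> t where \<omega>: "\<omega> = (\<eta>, t)" and \<eta>: "free_uf \<eta>"
    using assms(1) unfolding Omega_star_def by auto
  note U_not_bot = unbounded_uf_not_bot[OF U]
  have U_large: "eventually (\<lambda>x. a < x) U" for a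
    using filter_leD[OF unbounded_uf_le_at_top[OF U] eventually_gt_at_top] .
  note tendsto = phiQ_tendsto[where t=t, OF \<eta> U] and eqI = phiQ_eqI[where t=t, OF \<eta> U]
  show ?thesis
    unfolding is_T_invariant_mean_def \<omega>
  proof (intro conjI allI impI ballI)
    show "phiQ U (\<eta>, t) f = 0" if "f \<notin> Cub" for f
      using that by (simp add: phiQ_def)
    show "phiQ U (\<eta>, t) (\<lambda>x. f x + g x) = phiQ U (\<eta>, t) f + phiQ U (\<eta>, t) g"
      if "f \<in> Cub" "g \<in> Cub" for f g
      by (rule eqI[OF Cub_add[OF that]])
        (simp add: cesaro_mean_add[OF \<eta> that] tendsto_add tendsto[OF that(1)] tendsto[OF that(2)])
    show "phiQ U (\<eta>, t) (\<lambda>x. c * f x) = c * phiQ U (\<eta>, t) f" if "f \<in> Cub" for f c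
      by (rule eqI[OF Cub_cmult[OF that]])
        (simp add: cesaro_mean_cmult[OF \<eta> that] tendsto_mult tendsto[OF that])
    show "0 \<le> phiQ U (\<eta>, t) f" if f: "f \<in> Cub" "\<forall>x\<ge>0. 0 \<le> f x" for f
    proof (rule tendsto_lowerbound[OF tendsto[OF f(1)] _ U_not_bot])
      show "eventually (\<lambda>x. 0 \<le> cesaro_mean f (\<eta>, t) x) U"
        using U_large[of 0]
      proof (rule eventually_mono)
        fix x :: real assume "0 < x"
        have "0 \<le> integral {0..x} (f_omega f (\<eta>, t))"
          by (rule integral_nonneg[OF f_omega_integrable[OF \<eta> f(1)]])
            (simp add: f_omega_nonneg[OF \<eta>] f)
        with \<open>0 < x\<close> show "0 \<le> cesaro_mean f (\<eta>, t) x" by (simp add: cesaro_mean_def)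
      qed
    qed
    show "phiQ U (\<eta>, t) (\<lambda>_. 1) = 1"
    proof (rule eqI[OF Cub_const])
      have "eventually (\<lambda>x. cesaro_mean (\<lambda>_. 1) (\<eta>, t) x = 1) U"
        using U_large[of 0] by (rule eventually_mono) (simp add: cesaro_mean_def f_omega_const[OF \<eta>])
      then show "(cesaro_mean (\<lambda>_. 1) (\<eta>, t) \<longlongrightarrow> 1) U"
        by (rule tendsto_eventually)
    qed
    show "phiQ U (\<eta>, t) (shiftT r f) = phiQ U (\<eta>, t) f" if "0 \<le> r" "f \<in> Cub" for r f
      using phiQ_shiftT[OF \<eta> U that(2,1)] .
  qed
qed

section \<open>Approximating invariant means from below by Q\<close>

lemma integral_blocks:
  fixes h :: "real \<Rightarrow> real"
  assumes "continuous_on UNIV h" "0 \<le> \<delta>"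
  shows "(\<Sum>k<N. integral {z + real k * \<delta>..z + real k * \<delta> + \<delta>} h) = integral {z..z + real N * \<delta>} h"
proof (induction N)
  case (Suc N)
  have "integral {z..z + real N * \<delta>} h + integral {z + real N * \<delta>..z + real N * \<delta> + \<delta>} h
      = integral {z..z + real N * \<delta> + \<delta>} h"
    using assms by (intro Henstock_Kurzweil_Integration.integral_combine integrable_continuous_real
        continuous_on_subset[OF assms(1)]) auto
  with Suc show ?case by (simp add: algebra_simps)
qed simp

lemma le_integral_average:
  fixes h :: "real \<Rightarrow> real"
  assumes "continuous_on UNIV h" "0 < \<delta>" "\<delta> < d"
    and modulus: "\<And>u v. \<bar>u - v\<bar> < d \<Longrightarrow> \<bar>h u - h v\<bar> < e"
  shows "h z \<le> integral {z..z + \<delta>} h / \<delta> + e"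
proof -
  have "integral {z..z + \<delta>} (\<lambda>_. h z - e) \<le> integral {z..z + \<delta>} h"
  proof (rule integral_le)
    show "h z - e \<le> h s" if "s \<in> {z..z + \<delta>}" for s
      using modulus[of s z] that assms(3) by auto
  qed (auto intro: integrable_continuous_real continuous_on_subset[OF assms(1)])
  with \<open>0 < \<delta>\<close> show ?thesis by (simp add: field_simps)
qed

lemma grid_average_le_integral_average:
  fixes h :: "real \<Rightarrow> real"
  assumes h: "continuous_on UNIV h" and "0 < \<delta>" "\<delta> < d" "0 < N"
    and modulus: "\<And>u v. \<bar>u - v\<bar> < d \<Longrightarrow> \<bar>h u - h v\<bar> < e"
  shows "(\<Sum>k<N. h (z + real k * \<delta>)) / real N \<le> integral {z..z + real N * \<delta>} h / (real N * \<delta>) + e"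
proof -
  have "(\<Sum>k<N. h (z + real k * \<delta>)) / real N
      \<le> (\<Sum>k<N. integral {z + real k * \<delta>..z + real k * \<delta> + \<delta>} h / \<delta> + e) / real N"
    by (intro divide_right_mono sum_mono le_integral_average[OF h \<open>0 < \<delta>\<close> \<open>\<delta> < d\<close> modulus])
      simp_all
  also have "\<dots> = integral {z..z + real N * \<delta>} h / (real N * \<delta>) + e"
    using \<open>0 < \<delta>\<close> \<open>0 < N\<close>
    by (simp add: sum.distrib integral_blocks[OF h] flip: sum_divide_distrib) (simp add: field_simps)
  finally show ?thesis .
qed

text \<open>Averaging the translates of h over a grid of mesh \<delta> turns point values into window
  averages, so by invariance \<phi> h cannot exceed all window averages far out.\<close>
lemma mean_le_window_average:
  assumes mean: "is_T_invariant_mean \<phi>" and h: "h \<in> Cub" and "0 < \<epsilon>" "0 \<le> a"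
  shows "\<exists>L\<ge>L0. 0 < L \<and> (\<exists>x\<ge>a. (\<phi> h - \<epsilon>) * L \<le> integral {x..x + L} h)"
proof (rule ccontr)
  assume no_window: "\<not> ?thesis"
  obtain d where d: "0 < d" "\<And>u v. \<bar>u - v\<bar> < d \<Longrightarrow> \<bar>h u - h v\<bar> < \<epsilon> / 2"
    using Cub_modulus[OF h, of "\<epsilon> / 2"] \<open>0 < \<epsilon>\<close> by auto
  define \<delta> where "\<delta> = d / 2"
  define N :: nat where "N = nat \<lceil>L0 / \<delta>\<rceil> + 1"
  define L where "L = real N * \<delta>"
  have \<delta>: "0 < \<delta>" "\<delta> < d" using d(1) by (auto simp: \<delta>_def)
  have "L0 / \<delta> \<le> real N" "0 < N" by (simp_all add: N_def) linarith
  with \<delta> have L: "L0 \<le> L" "0 < L" by (simp_all add: L_def field_simps)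
  define g where "g = (\<lambda>y. \<Sum>k<N. (1 / real N) * shiftT (real k * \<delta>) h y)"
  have shift_Cub: "shiftT (real k * \<delta>) h \<in> Cub" for k
    using \<delta> by (intro Cub_shiftT h) simp
  have g: "g \<in> Cub" unfolding g_def by (intro Cub_sum shift_Cub)
  have "\<phi> g = (\<Sum>k<N. (1 / real N) * \<phi> (shiftT (real k * \<delta>) h))"
    unfolding g_def by (rule mean_sum[OF mean shift_Cub])
  also have "\<dots> = \<phi> h"
    using \<delta> \<open>0 < N\<close> by (simp add: mean_shiftT[OF mean] h)
  moreover have "\<phi> (shiftT a g) \<le> \<phi> h - \<epsilon> / 2"
  proof (rule mean_le[OF mean Cub_shiftT[OF g \<open>0 \<le> a\<close>]])
    fix y :: real assume "0 \<le> y"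
    define z where "z = y + a"
    have "shiftT a g y = (\<Sum>k<N. h (z + real k * \<delta>)) / real N"
      using \<open>0 \<le> y\<close> \<open>0 \<le> a\<close> \<delta>
      by (simp add: shiftT_def g_def z_def sum_divide_distrib add_ac)
    also have "\<dots> \<le> integral {z..z + L} h / L + \<epsilon> / 2"
      unfolding L_def
      by (rule grid_average_le_integral_average[OF Cub_continuous[OF h] \<delta> \<open>0 < N\<close> d(2)])
    also have "\<dots> \<le> \<phi> h - \<epsilon> / 2"
    proof -
      have "\<forall>x\<ge>a. \<not> (\<phi> h - \<epsilon>) * L \<le> integral {x..x + L} h"
        using no_window L by blast
      then have "integral {z..z + L} h < (\<phi> h - \<epsilon>) * L"
        using \<open>0 \<le> y\<close> by (auto simp: z_def not_le)
      with \<open>0 < L\<close> show ?thesis by (simp add: field_simps)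
    qed
    finally show "shiftT a g y \<le> \<phi> h - \<epsilon> / 2" .
  qed
  ultimately show False
    using mean_shiftT[OF mean \<open>0 \<le> a\<close> g] \<open>0 < \<epsilon>\<close> by simp
qed

text \<open>Rising sun: starting at a minimum of the integral of h - c on the window, every initial
  segment that stays inside the window has average at least c.\<close>
lemma rising_sun:
  fixes h :: "real \<Rightarrow> real"
  assumes h: "continuous_on UNIV h" and B: "\<And>x. \<bar>h x\<bar> \<le> B" and "0 < \<epsilon>" "0 < L"
    and window: "(c + \<epsilon>) * L \<le> integral {x0..x0 + L} h"
  shows "\<exists>y\<ge>x0. \<forall>l. 0 \<le> l \<and> l \<le> \<epsilon> * L / (B + \<bar>c\<bar> + 1) \<longrightarrow> c * l \<le> integral {y..y + l} h"
proof -
  define K where "K = B + \<bar>c\<bar> + 1"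
  have "0 \<le> B" using B[of 0] by linarith
  then have K: "0 < K" by (simp add: K_def)
  have int: "h integrable_on {u..v}" for u v
    by (intro integrable_continuous_real continuous_on_subset[OF h]) simp
  define G where "G u = integral {x0..u} h - c * (u - x0)" for u
  have "continuous_on {x0..x0 + L} G"
    unfolding G_def by (intro continuous_intros indefinite_integral_continuous_1 int)
  from continuous_attains_inf[OF compact_Icc _ this] \<open>0 < L\<close>
  obtain y where y: "y \<in> {x0..x0 + L}" and min: "\<And>u. u \<in> {x0..x0 + L} \<Longrightarrow> G y \<le> G u"
    by auto
  have split: "integral {x0..u} h = integral {x0..y} h + integral {y..u} h" if "y \<le> u" for u
    using y that by (intro Henstock_Kurzweil_Integration.integral_combine[symmetric] int) auto
  have "G y \<le> 0" using min[of x0] \<open>0 < L\<close> by (simp add: G_def)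
  moreover have "\<epsilon> * L \<le> G (x0 + L)" using window by (simp add: G_def algebra_simps)
  moreover have "integral {y..x0 + L} h \<le> B * (x0 + L - y)"
    using integral_bound[OF _ continuous_on_subset[OF h subset_UNIV], of y "x0 + L" B] y B
    by (simp add: abs_le_iff)
  moreover have "- c * (x0 + L - y) \<le> \<bar>c\<bar> * (x0 + L - y)"
    using y by (intro mult_right_mono) auto
  ultimately have "\<epsilon> * L \<le> K * (x0 + L - y)"
    using split[of "x0 + L"] y by (simp add: G_def K_def algebra_simps)
  then have room: "\<epsilon> * L / K \<le> x0 + L - y" using K by (simp add: field_simps)
  show ?thesis
  proof (intro exI[of _ y] conjI allI impI)
    fix l assume "0 \<le> l \<and> l \<le> \<epsilon> * L / (B + \<bar>c\<bar> + 1)"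
    with room y have "y + l \<in> {x0..x0 + L}" by (auto simp: K_def)
    with min[of "y + l"] split[of "y + l"] \<open>0 \<le> l \<and> _\<close>
    show "c * l \<le> integral {y..y + l} h" by (simp add: G_def algebra_simps)
  qed (use y in auto)
qed

lemma mean_le_initial_averages:
  assumes mean: "is_T_invariant_mean \<phi>" and h: "h \<in> Cub" and "0 < \<epsilon>"
  obtains xs where "\<And>m. real m \<le> xs m"
    and "\<And>m l. 0 \<le> l \<Longrightarrow> l \<le> real m \<Longrightarrow> (\<phi> h - \<epsilon>) * l \<le> integral {xs m..xs m + l} h"
proof -
  obtain B where B: "\<And>x. \<bar>h x\<bar> \<le> B" using Cub_bounded[OF h] by blast
  define c where "c = \<phi> h - \<epsilon>"
  define K where "K = B + \<bar>c\<bar> + 1"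
  have "0 \<le> B" using B[of 0] by linarith
  then have K: "0 < K" by (simp add: K_def)
  have "\<exists>x\<ge>real m. \<forall>l. 0 \<le> l \<and> l \<le> real m \<longrightarrow> c * l \<le> integral {x..x + l} h" for m
  proof -
    obtain L x0 where L: "2 * K * real m / \<epsilon> \<le> L" "0 < L" and "real m \<le> x0"
      and "(c + \<epsilon> / 2) * L \<le> integral {x0..x0 + L} h"
      using mean_le_window_average[OF mean h, of "\<epsilon> / 2" "real m" "2 * K * real m / \<epsilon>"] \<open>0 < \<epsilon>\<close>
      by (auto simp: c_def)
    with \<open>0 < \<epsilon>\<close> obtain y where "x0 \<le> y"
      and good: "\<And>l. 0 \<le> l \<and> l \<le> \<epsilon> / 2 * L / K \<Longrightarrow> c * l \<le> integral {y..y + l} h"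
      using rising_sun[OF Cub_continuous[OF h] B, of "\<epsilon> / 2" L c x0] by (auto simp: K_def)
    have "real m \<le> \<epsilon> / 2 * L / K"
      using L(1) K \<open>0 < \<epsilon>\<close> by (simp add: field_simps)
    with good \<open>real m \<le> x0\<close> \<open>x0 \<le> y\<close> show ?thesis by (intro exI[of _ y]) auto
  qed
  then obtain xs where "\<And>m. real m \<le> xs m \<and> (\<forall>l. 0 \<le> l \<and> l \<le> real m \<longrightarrow> c * l \<le> integral {xs m..xs m + l} h)"
    by metis
  with that show ?thesis by (auto simp: c_def)
qed

lemma Cub_tendsto_diff:
  assumes "f \<in> Cub" "((\<lambda>m. u m - v m) \<longlongrightarrow> 0) F"
  shows "((\<lambda>m. f (u m) - f (v m)) \<longlongrightarrow> 0) F"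
proof (rule tendstoI)
  fix e :: real assume "0 < e"
  then obtain d where "0 < d" and d: "\<And>x y. \<bar>x - y\<bar> < d \<Longrightarrow> \<bar>f x - f y\<bar> < e"
    using Cub_modulus[OF assms(1)] by metis
  from tendstoD[OF assms(2) \<open>0 < d\<close>]
  show "eventually (\<lambda>m. dist (f (u m) - f (v m)) 0 < e) F"
    by (rule eventually_mono) (simp add: dist_real_def d)
qed

text \<open>Take an ultrafilter limit of the fractional parts of xs m; the integer parts (raised by one
  if that limit is 1) push the ultrafilter forward to a free ultrafilter on nat.\<close>
lemma limit_point_in_Omega_star:
  assumes xs: "\<And>m. real m \<le> xs m"
  obtains \<eta> t V where "(\<eta>, t) \<in> Omega_star" "V \<le> sequentially" "ultrafilter V"
    "\<And>f s. f \<in> Cub \<Longrightarrow> ((\<lambda>m. f (xs m + s)) \<longlongrightarrow> f_omega f (\<eta>, t) s) V"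
proof -
  obtain V :: "nat filter" where V: "V \<le> sequentially" "ultrafilter V"
    using ultrafilter_le_exists[of sequentially] by auto
  define fr where "fr m = xs m - of_int \<lfloor>xs m\<rfloor>" for m
  have fr: "0 \<le> fr m" "fr m \<le> 1" for m
    unfolding fr_def by linarith+
  define \<rho> where "\<rho> = Lim V fr"
  have \<rho>: "(fr \<longlongrightarrow> \<rho>) V"
    unfolding \<rho>_def using fr by (intro ultrafilter_tendsto_Lim[OF V(2), of _ 1] always_eventually) auto
  have "0 \<le> \<rho>" "\<rho> \<le> 1"
    using tendsto_lowerbound[OF \<rho>] tendsto_upperbound[OF \<rho>] fr ultrafilter_not_bot[OF V(2)]
    by auto
  define j :: nat where "j = (if \<rho> < 1 then 0 else 1)"
  define t where "t = \<rho> - real j"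
  define N where "N m = nat \<lfloor>xs m\<rfloor> + j" for m
  have t: "0 \<le> t" "t < 1" using \<open>0 \<le> \<rho>\<close> \<open>\<rho> \<le> 1\<close> by (auto simp: t_def j_def)
  have N_ge: "m \<le> N m" for m
  proof -
    have "int m \<le> \<lfloor>xs m\<rfloor>" using xs[of m] by (simp add: le_floor_iff)
    then show ?thesis by (simp add: N_def le_nat_iff)
  qed
  have "(xs m + s) - (real (N m) + t + s) = fr m - \<rho>" for m s
    using xs[of m] by (simp add: N_def t_def fr_def)
  then have close: "((\<lambda>m. (xs m + s) - (real (N m) + t + s)) \<longlongrightarrow> 0) V" for s
    using tendsto_diff[OF \<rho> tendsto_const[of \<rho>]] by simp
  define \<eta> where "\<eta> = filtermap N V"
  have \<eta>: "free_uf \<eta>"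
    unfolding \<eta>_def by (rule free_uf_filtermap[OF V(2,1) N_ge])
  have "((\<lambda>m. f (xs m + s)) \<longlongrightarrow> f_omega f (\<eta>, t) s) V" if f: "f \<in> Cub" for f s
  proof -
    have "((\<lambda>m. f (real (N m) + t + s)) \<longlongrightarrow> f_omega f (\<eta>, t) s) V"
      using f_omega_tendsto[OF \<eta> f] by (simp add: \<eta>_def filterlim_filtermap)
    from tendsto_add[OF Cub_tendsto_diff[OF f close[of s]] this] show ?thesis by simp
  qed
  with that[of \<eta> t V] \<eta> t V show ?thesis by (simp add: Omega_star_def)
qed

lemma uniform_limit_equicontinuous:
  fixes g :: "'a \<Rightarrow> real \<Rightarrow> real"
  assumes "F \<noteq> bot" and lim: "\<And>s. ((\<lambda>m. g m s) \<longlongrightarrow> G s) F"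
    and equi: "\<And>e. 0 < e \<Longrightarrow> \<exists>d>0. \<forall>m s s'. \<bar>s - s'\<bar> < d \<longrightarrow> \<bar>g m s - g m s'\<bar> < e"
  shows "uniform_limit {a..b} g G F"
proof (rule uniform_limitI)
  fix e :: real assume "0 < e"
  then obtain d where "0 < d" and d: "\<And>m s s'. \<bar>s - s'\<bar> < d \<Longrightarrow> \<bar>g m s - g m s'\<bar> < e / 3"
    using equi[of "e / 3"] by auto
  have G: "\<bar>G s - G s'\<bar> \<le> e / 3" if "\<bar>s - s'\<bar> < d" for s s'
  proof (rule tendsto_upperbound[OF tendsto_rabs[OF tendsto_diff[OF lim lim]] _ \<open>F \<noteq> bot\<close>])
    show "eventually (\<lambda>m. \<bar>g m s - g m s'\<bar> \<le> e / 3) F"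
      using d[OF that] by (simp add: less_imp_le)
  qed
  define grid where "grid = (\<lambda>j. a + real j * d) ` {..nat \<lceil>(b - a) / d\<rceil>}"
  have "eventually (\<lambda>m. \<forall>p\<in>grid. \<bar>g m p - G p\<bar> < e / 3) F"
    unfolding grid_def using tendstoD[OF lim, of "e / 3"] \<open>0 < e\<close>
    by (intro eventually_ball_finite) (auto simp: dist_real_def)
  then show "eventually (\<lambda>m. \<forall>s\<in>{a..b}. dist (g m s) (G s) < e) F"
  proof (rule eventually_mono, intro ballI)
    fix m s assume near: "\<forall>p\<in>grid. \<bar>g m p - G p\<bar> < e / 3" and s: "s \<in> {a..b}"
    define j where "j = nat \<lfloor>(s - a) / d\<rfloor>"
    have "real j \<le> (s - a) / d" "(s - a) / d < real j + 1"
      using s \<open>0 < d\<close> by (auto simp: j_def)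
    then have "a + real j * d \<le> s" "s < a + real j * d + d"
      using \<open>0 < d\<close> by (simp_all add: field_simps)
    moreover have "(s - a) / d \<le> (b - a) / d"
      using s \<open>0 < d\<close> by (simp add: divide_right_mono)
    then have "j \<le> nat \<lceil>(b - a) / d\<rceil>"
      unfolding j_def by (intro nat_mono order.trans[OF floor_le_ceiling ceiling_mono])
    then have "a + real j * d \<in> grid"
      unfolding grid_def by (intro image_eqI[where x=j]) auto
    ultimately have "\<bar>g m s - g m (a + real j * d)\<bar> < e / 3" "\<bar>g m (a + real j * d) - G (a + real j * d)\<bar> < e / 3"
      "\<bar>G (a + real j * d) - G s\<bar> \<le> e / 3"
      using near d[of s "a + real j * d" m] G[of "a + real j * d" s] by auto
    then show "dist (g m s) (G s) < e"
      unfolding dist_real_def by linarith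
  qed
qed

lemma integral_tendsto_of_uniform_limit:
  fixes g :: "'a \<Rightarrow> real \<Rightarrow> real"
  assumes "uniform_limit {a..b} g G F" "\<And>m. continuous_on {a..b} (g m)" "F \<noteq> bot"
  shows "((\<lambda>m. integral {a..b} (g m)) \<longlongrightarrow> integral {a..b} G) F"
proof -
  obtain I J where I: "\<And>m. (g m has_integral I m) {a..b}" and J: "(G has_integral J) {a..b}"
    and "(I \<longlongrightarrow> J) F"
    using uniform_limit_integral[OF assms] by blast
  moreover have "I = (\<lambda>m. integral {a..b} (g m))" using I by (auto intro: integral_unique[symmetric])
  moreover have "J = integral {a..b} G" using J by (rule integral_unique[symmetric])
  ultimately show ?thesis by simp
qed

lemma integral_translates_tendsto:
  fixes h :: "real \<Rightarrow> real"
  assumes h: "h \<in> Cub" and "F \<noteq> bot" and lim: "\<And>s. ((\<lambda>m. h (xs m + s)) \<longlongrightarrow> H s) F"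
  shows "((\<lambda>m. integral {xs m..xs m + l} h) \<longlongrightarrow> integral {0..l} H) F"
proof -
  have "uniform_limit {0..l} (\<lambda>m s. h (xs m + s)) H F"
  proof (rule uniform_limit_equicontinuous[OF \<open>F \<noteq> bot\<close> lim])
    fix e :: real assume "0 < e"
    then obtain d where "0 < d" "\<And>x y. \<bar>x - y\<bar> < d \<Longrightarrow> \<bar>h x - h y\<bar> < e"
      using Cub_modulus[OF h] by metis
    then show "\<exists>d>0. \<forall>m s s'. \<bar>s - s'\<bar> < d \<longrightarrow> \<bar>h (xs m + s) - h (xs m + s')\<bar> < e"
      by (intro exI[of _ d]) auto
  qed
  moreover have "continuous_on {0..l} (\<lambda>s. h (xs m + s))" for m
    by (intro continuous_on_compose2[OF Cub_continuous[OF h, of UNIV]] continuous_intros) auto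
  ultimately have "((\<lambda>m. integral {0..l} (\<lambda>s. h (xs m + s))) \<longlongrightarrow> integral {0..l} H) F"
    using \<open>F \<noteq> bot\<close> by (rule integral_tendsto_of_uniform_limit)
  then show ?thesis by (simp add: integral_translate_Icc add.commute)
qed

lemma Qset_approximates_mean:
  assumes mean: "is_T_invariant_mean \<phi>" and h: "h \<in> Cub" and "0 < \<epsilon>"
  shows "\<exists>\<psi>\<in>Qset. \<phi> h - \<epsilon> \<le> \<psi> h"
proof -
  define c where "c = \<phi> h - \<epsilon>"
  obtain xs where xs: "\<And>m. real m \<le> xs m"
    and good: "\<And>m l. 0 \<le> l \<Longrightarrow> l \<le> real m \<Longrightarrow> c * l \<le> integral {xs m..xs m + l} h"
    using mean_le_initial_averages[OF mean h \<open>0 < \<epsilon>\<close>] unfolding c_def by blast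
  obtain \<eta> t V where \<omega>: "(\<eta>, t) \<in> Omega_star" and V: "V \<le> sequentially" "ultrafilter V"
    and lim: "\<And>f s. f \<in> Cub \<Longrightarrow> ((\<lambda>m. f (xs m + s)) \<longlongrightarrow> f_omega f (\<eta>, t) s) V"
    using limit_point_in_Omega_star[OF xs] by blast
  have \<eta>: "free_uf \<eta>" using \<omega> by (simp add: Omega_star_def)
  have V_not_bot: "V \<noteq> bot" using ultrafilter_not_bot[OF V(2)] .
  have lower: "c * l \<le> integral {0..l} (f_omega h (\<eta>, t))" if "0 < l" for l
  proof (rule tendsto_lowerbound[OF integral_translates_tendsto[OF h V_not_bot lim[OF h]] _ V_not_bot])
    have "eventually (\<lambda>m. l \<le> real m) sequentially"
      using filterlim_real_sequentially by (simp add: filterlim_at_top)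
    then have "eventually (\<lambda>m. l \<le> real m) V" by (rule filter_leD[OF V(1)])
    then show "eventually (\<lambda>m. c * l \<le> integral {xs m..xs m + l} h) V"
      by (rule eventually_mono) (use good that in simp)
  qed
  have "eventually (\<lambda>x. c \<le> cesaro_mean h (\<eta>, t) x) U" if "unbounded_uf U" for U
    using filter_leD[OF unbounded_uf_le_at_top[OF that] eventually_gt_at_top[of 0]]
  proof (rule eventually_mono)
    fix x :: real assume "0 < x"
    with lower[of x] show "c \<le> cesaro_mean h (\<eta>, t) x" by (simp add: cesaro_mean_def field_simps)
  qed
  moreover obtain U where U: "unbounded_uf U" using unbounded_uf_exists by blast
  ultimately have "c \<le> phiQ U (\<eta>, t) h"
    using tendsto_lowerbound[OF phiQ_tendsto[OF \<eta> U h] _ unbounded_uf_not_bot[OF U]] by blast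
  moreover have "phiQ U (\<eta>, t) \<in> Qset" using \<omega> U by (auto simp: Qset_def)
  ultimately show ?thesis by (auto simp: c_def)
qed

section \<open>Separation in finitely many coordinates\<close>

lemma not_in_closure_finite_coordinates:
  fixes \<phi> :: "'a \<Rightarrow> real"
  assumes "\<phi> \<notin> closure A"
  obtains F \<epsilon> where "finite F" "0 < \<epsilon>" "\<forall>\<psi>\<in>A. \<exists>f\<in>F. \<epsilon> \<le> \<bar>\<psi> f - \<phi> f\<bar>"
proof -
  have "openin (product_topology (\<lambda>_. euclidean) UNIV) (- closure A)"
    using open_Compl[OF closed_closure[of A]] unfolding open_fun_def .
  from product_topology_open_contains_basis[OF this] assms
  obtain X where X: "\<phi> \<in> Pi\<^sub>E UNIV X" "\<forall>f. openin euclidean (X f)"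
    "finite {f. X f \<noteq> topspace euclidean}" and sub: "Pi\<^sub>E UNIV X \<subseteq> - closure A"
    by blast
  define F where "F = {f. X f \<noteq> UNIV}"
  have "\<forall>f. \<exists>e>0. ball (\<phi> f) e \<subseteq> X f"
  proof
    fix f
    have "open (X f)" "\<phi> f \<in> X f" using X(1,2) by (auto simp: PiE_iff)
    then show "\<exists>e>0. ball (\<phi> f) e \<subseteq> X f" using open_contains_ball by blast
  qed
  from choice[OF this] obtain e where e: "\<And>f. 0 < e f" "\<And>f. ball (\<phi> f) (e f) \<subseteq> X f"
    by blast
  define \<epsilon> where "\<epsilon> = Min (insert 1 (e ` F))"
  have F: "finite F" and \<epsilon>: "0 < \<epsilon>" "\<And>f. f \<in> F \<Longrightarrow> \<epsilon> \<le> e f"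
    using X(3) e(1) by (auto simp: F_def \<epsilon>_def)
  have "\<exists>f\<in>F. \<epsilon> \<le> \<bar>\<psi> f - \<phi> f\<bar>" if \<psi>: "\<psi> \<in> A" for \<psi>
  proof (rule ccontr)
    assume near: "\<not> (\<exists>f\<in>F. \<epsilon> \<le> \<bar>\<psi> f - \<phi> f\<bar>)"
    have "\<psi> f \<in> X f" for f
    proof (cases "f \<in> F")
      case True
      with near \<epsilon>(2)[OF True] have "dist (\<phi> f) (\<psi> f) < e f"
        by (auto simp: dist_real_def abs_minus_commute)
      with e(2)[of f] show ?thesis by auto
    qed (simp add: F_def)
    then have "\<psi> \<in> Pi\<^sub>E UNIV X" by (simp add: PiE_UNIV_domain)
    with sub \<psi> closure_subset show False by blast
  qed
  then show ?thesis using that[OF F \<epsilon>(1)] by blast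
qed

lemma sum_square_diff_convex_combination:
  fixes p w u :: "'a \<Rightarrow> real"
  shows "(\<Sum>f\<in>F. (p f - ((1 - t) * w f + t * u f))\<^sup>2)
    = (\<Sum>f\<in>F. (p f - w f)\<^sup>2) - 2 * t * (\<Sum>f\<in>F. (p f - w f) * (u f - w f))
      + t\<^sup>2 * (\<Sum>f\<in>F. (u f - w f)\<^sup>2)"
proof -
  have "(\<Sum>f\<in>F. (p f - ((1 - t) * w f + t * u f))\<^sup>2)
      = (\<Sum>f\<in>F. (p f - w f)\<^sup>2 - 2 * t * ((p f - w f) * (u f - w f)) + t\<^sup>2 * (u f - w f)\<^sup>2)"
    by (rule sum.cong) (simp_all add: power2_eq_square algebra_simps)
  then show ?thesis by (simp add: sum.distrib sum_subtractf sum_distrib_left)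
qed

lemma near_minimiser_inner_bound:
  fixes p w u :: "'a \<Rightarrow> real"
  assumes "(\<Sum>f\<in>F. (p f - w f)\<^sup>2) < (\<Sum>f\<in>F. (p f - ((1 - t) * w f + t * u f))\<^sup>2) + t * \<delta>" "0 < t"
  shows "2 * (\<Sum>f\<in>F. (p f - w f) * (u f - w f)) < \<delta> + t * (\<Sum>f\<in>F. (u f - w f)\<^sup>2)"
proof -
  have "t * (2 * (\<Sum>f\<in>F. (p f - w f) * (u f - w f))) < t * (\<delta> + t * (\<Sum>f\<in>F. (u f - w f)\<^sup>2))"
    using assms(1) unfolding sum_square_diff_convex_combination
    by (simp add: power2_eq_square algebra_simps)
  then show ?thesis using \<open>0 < t\<close> by (simp only: mult_less_cancel_left_pos)
qed

lemma sum_square_diff_le: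
  fixes u w :: "'a \<Rightarrow> real"
  assumes "\<And>f. f \<in> F \<Longrightarrow> \<bar>u f\<bar> \<le> B f" "\<And>f. f \<in> F \<Longrightarrow> \<bar>w f\<bar> \<le> B f"
  shows "(\<Sum>f\<in>F. (u f - w f)\<^sup>2) \<le> (\<Sum>f\<in>F. (2 * B f)\<^sup>2)"
proof (rule sum_mono)
  fix f assume "f \<in> F"
  then have "\<bar>u f - w f\<bar> \<le> 2 * B f" using assms[of f] by linarith
  then show "(u f - w f)\<^sup>2 \<le> (2 * B f)\<^sup>2" by (metis abs_ge_zero power2_abs power_mono)
qed

text \<open>Minimise the squared distance to p over C: since moving from a near-minimiser w towards
  any u in C cannot decrease the distance much, c = p - w separates p from C.\<close>
lemma finite_convex_separation:
  fixes p :: "'a \<Rightarrow> real" and C :: "('a \<Rightarrow> real) set"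
  assumes "finite F" "C \<noteq> {}" "0 < \<epsilon>"
    and convex: "\<And>w u t. w \<in> C \<Longrightarrow> u \<in> C \<Longrightarrow> 0 \<le> t \<Longrightarrow> t \<le> 1 \<Longrightarrow> (\<lambda>f. (1 - t) * w f + t * u f) \<in> C"
    and bounded: "\<And>f. f \<in> F \<Longrightarrow> \<exists>B. \<forall>u\<in>C. \<bar>u f\<bar> \<le> B"
    and far: "\<And>u. u \<in> C \<Longrightarrow> \<exists>f\<in>F. \<epsilon> \<le> \<bar>u f - p f\<bar>"
  shows "\<exists>c. \<forall>u\<in>C. \<epsilon>\<^sup>2 / 2 < (\<Sum>f\<in>F. c f * (p f - u f))"
proof -
  obtain B where B: "\<And>u f. u \<in> C \<Longrightarrow> f \<in> F \<Longrightarrow> \<bar>u f\<bar> \<le> B f"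
    using bchoice[of F "\<lambda>f B. \<forall>u\<in>C. \<bar>u f\<bar> \<le> B"] bounded by blast
  define S where "S u = (\<Sum>f\<in>F. (p f - u f)\<^sup>2)" for u
  define R where "R = (\<Sum>f\<in>F. (2 * B f)\<^sup>2)"
  have R: "(\<Sum>f\<in>F. (u f - w f)\<^sup>2) \<le> R" if "u \<in> C" "w \<in> C" for u w
    unfolding R_def using B that by (intro sum_square_diff_le)
  have S: "\<epsilon>\<^sup>2 \<le> S u" if u: "u \<in> C" for u
  proof -
    obtain f where "f \<in> F" "\<epsilon> \<le> \<bar>u f - p f\<bar>" using far[OF u] by blast
    then have "\<epsilon>\<^sup>2 \<le> (p f - u f)\<^sup>2"
      using \<open>0 < \<epsilon>\<close> by (metis abs_minus_commute less_imp_le power2_abs power_mono)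
    also have "\<dots> \<le> S u"
      unfolding S_def using \<open>f \<in> F\<close> \<open>finite F\<close> by (intro member_le_sum) auto
    finally show ?thesis .
  qed
  have "0 \<le> R" unfolding R_def by (intro sum_nonneg) simp
  define t where "t = min 1 (\<epsilon>\<^sup>2 / (2 * R + 2))"
  have t: "0 < t" "t \<le> 1" "t * R \<le> \<epsilon>\<^sup>2 / 2"
  proof -
    show "0 < t" "t \<le> 1" using \<open>0 < \<epsilon>\<close> \<open>0 \<le> R\<close> by (auto simp: t_def)
    have "\<epsilon>\<^sup>2 / (2 * R + 2) * R \<le> \<epsilon>\<^sup>2 / 2"
      using \<open>0 \<le> R\<close> by (simp add: field_simps)
    then show "t * R \<le> \<epsilon>\<^sup>2 / 2"
      using \<open>0 \<le> R\<close> by (smt (verit) min.cobounded2 mult_right_mono t_def)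
  qed
  have "Inf (S ` C) < Inf (S ` C) + t * (\<epsilon>\<^sup>2 / 2)" using t(1) \<open>0 < \<epsilon>\<close> by simp
  then have "\<exists>x\<in>S ` C. x < Inf (S ` C) + t * (\<epsilon>\<^sup>2 / 2)"
    using \<open>C \<noteq> {}\<close> by (intro cInf_lessD) auto
  then obtain w where "w \<in> C" "S w < Inf (S ` C) + t * (\<epsilon>\<^sup>2 / 2)" by blast
  moreover have "Inf (S ` C) \<le> S u" if "u \<in> C" for u
    using S that by (intro cInf_lower imageI bdd_belowI[of _ "\<epsilon>\<^sup>2"]) auto
  ultimately have w: "w \<in> C" "\<And>u. u \<in> C \<Longrightarrow> S w < S u + t * (\<epsilon>\<^sup>2 / 2)"
    by fastforce+
  define c where "c f = p f - w f" for f
  have "\<epsilon>\<^sup>2 / 2 < (\<Sum>f\<in>F. c f * (p f - u f))" if "u \<in> C" for u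
  proof -
    define P where "P = (\<Sum>f\<in>F. (p f - w f) * (u f - w f))"
    have "2 * P < \<epsilon>\<^sup>2 / 2 + t * (\<Sum>f\<in>F. (u f - w f)\<^sup>2)"
      unfolding P_def using w(2)[OF convex[OF w(1) that]] t
      by (intro near_minimiser_inner_bound) (simp_all add: S_def)
    also have "\<dots> \<le> \<epsilon>\<^sup>2 / 2 + t * R"
      using R[OF that w(1)] t by (simp add: mult_left_mono)
    finally have "P < \<epsilon>\<^sup>2 / 2" using t(3) by linarith
    have "(\<Sum>f\<in>F. c f * (p f - u f)) = (\<Sum>f\<in>F. (p f - w f)\<^sup>2 - (p f - w f) * (u f - w f))"
      by (rule sum.cong) (simp_all add: c_def power2_eq_square algebra_simps)
    also have "\<dots> = S w - P"
      by (simp add: S_def P_def sum_subtractf)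
    finally show ?thesis using S[OF w(1)] \<open>P < \<epsilon>\<^sup>2 / 2\<close> by simp
  qed
  then show ?thesis by (intro exI[where x=c] ballI) simp
qed

lemma Qset_means: "\<psi> \<in> Qset \<Longrightarrow> is_T_invariant_mean \<psi>"
  by (auto simp: Qset_def intro: phiQ_is_T_invariant_mean)

lemma conv_hull_Qset_means: "\<psi> \<in> conv_hull_fun Qset \<Longrightarrow> is_T_invariant_mean \<psi>"
  using conv_hull_fun_means[OF Qset_means] .

lemma mean_outside_closure_separated:
  assumes mean: "is_T_invariant_mean \<phi>" and "\<phi> \<notin> closure (conv_hull_fun Qset)"
  obtains h \<delta> where "h \<in> Cub" "0 < \<delta>" "\<forall>\<psi>\<in>conv_hull_fun Qset. \<psi> h + \<delta> < \<phi> h"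
proof -
  obtain F \<epsilon> where "finite F" "0 < \<epsilon>"
    and far: "\<forall>\<psi>\<in>conv_hull_fun Qset. \<exists>f\<in>F. \<epsilon> \<le> \<bar>\<psi> f - \<phi> f\<bar>"
    by (rule not_in_closure_finite_coordinates[OF assms(2)])
  have far_Cub: "\<exists>f\<in>F \<inter> Cub. \<epsilon> \<le> \<bar>\<psi> f - \<phi> f\<bar>" if \<psi>: "\<psi> \<in> conv_hull_fun Qset" for \<psi>
  proof -
    obtain f where f: "f \<in> F" "\<epsilon> \<le> \<bar>\<psi> f - \<phi> f\<bar>" using far \<psi> by blast
    with \<open>0 < \<epsilon>\<close> have "f \<in> Cub"
      using mean_outside_Cub[OF mean] mean_outside_Cub[OF conv_hull_Qset_means[OF \<psi>]] by force
    with f show ?thesis by blast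
  qed
  have bounded: "\<exists>B. \<forall>\<psi>\<in>conv_hull_fun Qset. \<bar>\<psi> f\<bar> \<le> B" if f: "f \<in> F \<inter> Cub" for f
  proof -
    obtain B where B: "\<And>x. \<bar>f x\<bar> \<le> B" using Cub_bounded[of f] f by blast
    have "\<bar>\<psi> f\<bar> \<le> B" if "\<psi> \<in> conv_hull_fun Qset" for \<psi>
      using mean_abs_le[OF conv_hull_Qset_means[OF that] B] .
    then show ?thesis by blast
  qed
  obtain \<psi>0 where "\<psi>0 \<in> Qset"
    using Qset_approximates_mean[OF mean Cub_const zero_less_one] by blast
  then have "conv_hull_fun Qset \<noteq> {}" using conv_hull_fun_inc by blast
  from finite_convex_separation[OF _ this \<open>0 < \<epsilon>\<close> conv_hull_fun_convex bounded far_Cub] \<open>finite F\<close>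
  obtain c where c: "\<And>\<psi>. \<psi> \<in> conv_hull_fun Qset \<Longrightarrow> \<epsilon>\<^sup>2 / 2 < (\<Sum>f\<in>F \<inter> Cub. c f * (\<phi> f - \<psi> f))"
    by blast
  define h where "h = (\<lambda>x. \<Sum>f\<in>F \<inter> Cub. c f * f x)"
  have h_mean: "\<xi> h = (\<Sum>f\<in>F \<inter> Cub. c f * \<xi> f)" if "is_T_invariant_mean \<xi>" for \<xi>
    unfolding h_def by (rule mean_sum[OF that]) simp
  have "h \<in> Cub" unfolding h_def by (rule Cub_sum) simp
  moreover have "0 < \<epsilon>\<^sup>2 / 2" using \<open>0 < \<epsilon>\<close> by simp
  moreover have "\<forall>\<psi>\<in>conv_hull_fun Qset. \<psi> h + \<epsilon>\<^sup>2 / 2 < \<phi> h"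
  proof
    fix \<psi> assume \<psi>: "\<psi> \<in> conv_hull_fun Qset"
    show "\<psi> h + \<epsilon>\<^sup>2 / 2 < \<phi> h"
      using c[OF \<psi>] h_mean[OF mean] h_mean[OF conv_hull_Qset_means[OF \<psi>]]
      by (simp add: sum_subtractf right_diff_distrib)
  qed
  ultimately show ?thesis by (rule that)
qed

theorem theorem2p2:
  shows "{\<phi>. is_T_invariant_mean \<phi>} = closure (conv_hull_fun Qset)"
proof
  show "closure (conv_hull_fun Qset) \<subseteq> {\<phi>. is_T_invariant_mean \<phi>}"
    using closed_means conv_hull_Qset_means by (intro closure_minimal) auto
  show "{\<phi>. is_T_invariant_mean \<phi>} \<subseteq> closure (conv_hull_fun Qset)"
  proof (rule subsetI, rule ccontr)
    fix \<phi> assume "\<phi> \<in> {\<phi>. is_T_invariant_mean \<phi>}" and "\<phi> \<notin> closure (conv_hull_fun Qset)"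
    then have mean: "is_T_invariant_mean \<phi>" by simp
    obtain h \<delta> where h: "h \<in> Cub" "0 < \<delta>"
      and separated: "\<forall>\<psi>\<in>conv_hull_fun Qset. \<psi> h + \<delta> < \<phi> h"
      by (rule mean_outside_closure_separated[OF mean \<open>\<phi> \<notin> closure _\<close>])
    obtain \<psi> where "\<psi> \<in> Qset" "\<phi> h - \<delta> \<le> \<psi> h"
      using Qset_approximates_mean[OF mean h] by blast
    with separated conv_hull_fun_inc show False by fastforce
  qed
qed

end
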